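(* Let $E_t$ be the set of the first $m_t$ edges of a temporal graph stream, $M$ a temporal motif with $3$ edges, $\delta\ge0$, $q\in(0,1]$, and $r$ an integer with $1\le r\le m_t$. Let $\widehat E_t$ be a uniformly random $r$-element subset of $E_t$, let $(\omega_{e,g})_{e\in E_t,g\in E(e)}$ be independent Bernoulli($q$) variables independent of $\widehat E_t$, and let $$\widehat C_{M,t}=\frac{m_t}{rq}\sum_{e\in\widehat E_t}\sum_{g\in E(e)}\omega_{e,g}\,\eta(W_{e,g}).$$ Then $\mathrm{Var}[\widehat C_{M,t}]\le\frac{m_t-rq}{rq}\,C_{M,t}^2$.
   Context: A temporal graph stream is a sequence of temporal edges $(u,v,t)$ (directed edge from vertex $u$ to vertex $v$ with timestamp $t\in\mathbb{R}^+$, timestamps pairwise distinct) arriving in increasing order of timestamp; $E_t$ is the set of the $m_t$ edges with timestamp at most $t$. A temporal motif $M$ is an ordered sequence of $l$ directed edges $\langle e'_1=(u'_1,v'_1),\dots,e'_l=(u'_l,v'_l)\rangle$ on a vertex set $V_M$ whose underlying graph is connected; here $l=3$. A sequence $\langle (w_1,x_1,t_1),\dots,(w_l,x_l,t_l)\rangle$ of edges with $t_1<\dots<t_l$ is a $\delta$-instance of $M$ if there is a bijection $f$ from its vertices to $V_M$ with $f(w_i)=u'_i$, $f(x_i)=v'_i$ for all $i$, and $t_l-t_1\le\delta$. $C_{M,t}$ is the number of $\delta$-instances of $M$ among the edges of $E_t$. For $e\in E_t$, $\eta(e)$ denotes the number of $\delta$-instances of $M$ whose last (third) edge is $e$. Wedge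 data: for each edge $e$ there is a finite set $E(e)$ of earlier edges and for each $g\in E(e)$ a nonnegative integer $\eta(W_{e,g})$ (the number of $\delta$-instances of $M$ containing the temporal wedge formed by $e$ and $g$, with $e$ mapped to $e'_3$), such that $\sum_{g\in E(e)}\eta(W_{e,g})=\eta(e)$. *)

theory Defs
  imports "HOL-Probability.Probability" "HOL-Probability.Product_PMF"
begin

type_synonym 'v tedge = "'v \<times> 'v \<times> real"

definition src :: "'v tedge \<Rightarrow> 'v" where "src e = fst e"
definition dst :: "'v tedge \<Rightarrow> 'v" where "dst e = fst (snd e)"
definition tm :: "'v tedge \<Rightarrow> real" where "tm e = snd (snd e)"

definition motif_vertices :: "('w \<times> 'w) list \<Rightarrow> 'w set" where
  "motif_vertices M = (\<Union>(a, b)\<in>set M. {a, b})"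

definition motif_connected :: "('w \<times> 'w) list \<Rightarrow> bool" where
  "motif_connected M =
     (\<forall>a\<in>motif_vertices M. \<forall>b\<in>motif_vertices M.
        (\<lambda>x y. (x, y) \<in> set M \<or> (y, x) \<in> set M)\<^sup>*\<^sup>* a b)"

definition seq_vertices :: "'v tedge list \<Rightarrow> 'v set" where
  "seq_vertices xs = (\<Union>e\<in>set xs. {src e, dst e})"

definition delta_instance :: "('w \<times> 'w) list \<Rightarrow> real \<Rightarrow> 'v tedge list \<Rightarrow> bool" where
  "delta_instance M \<delta> xs =
     (length xs = length M \<and> xs \<noteq> [] \<and>
      sorted_wrt (\<lambda>a b. tm a < tm b) xs \<and>
      (\<exists>f. bij_betw f (seq_vertices xs) (motif_vertices M) \<and>
           (\<forall>i<length xs. f (src (xs ! i)) = fst (M ! i) \<and> f (dst (xs ! i)) = snd (M ! i))) \<and>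
      tm (last xs) - tm (hd xs) \<le> \<delta>)"

definition motif_count :: "('w \<times> 'w) list \<Rightarrow> real \<Rightarrow> 'v tedge set \<Rightarrow> nat" where
  "motif_count M \<delta> Et = card {xs. set xs \<subseteq> Et \<and> delta_instance M \<delta> xs}"

definition eta :: "('w \<times> 'w) list \<Rightarrow> real \<Rightarrow> 'v tedge set \<Rightarrow> 'v tedge \<Rightarrow> nat" where
  "eta M \<delta> Et e = card {xs. set xs \<subseteq> Et \<and> delta_instance M \<delta> xs \<and> last xs = e}"

definition sample_pmf ::
  "'v tedge set \<Rightarrow> ('v tedge \<Rightarrow> 'v tedge set) \<Rightarrow> nat \<Rightarrow> real
     \<Rightarrow> ('v tedge set \<times> ('v tedge \<times> 'v tedge \<Rightarrow> bool)) pmf" where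
  "sample_pmf Et Ew r q =
     pair_pmf (pmf_of_set {S. S \<subseteq> Et \<and> card S = r})
              (Pi_pmf (SIGMA e:Et. Ew e) False (\<lambda>_. bernoulli_pmf q))"

definition estimator ::
  "'v tedge set \<Rightarrow> ('v tedge \<Rightarrow> 'v tedge set) \<Rightarrow> ('v tedge \<Rightarrow> 'v tedge \<Rightarrow> nat) \<Rightarrow> nat \<Rightarrow> real
     \<Rightarrow> 'v tedge set \<times> ('v tedge \<times> 'v tedge \<Rightarrow> bool) \<Rightarrow> real" where
  "estimator Et Ew W r q = (\<lambda>(S, \<omega>).
     real (card Et) / (real r * q) *
       (\<Sum>e\<in>S. \<Sum>g\<in>Ew e. (if \<omega> (e, g) then 1 else 0) * real (W e g)))"

end

theory Submission
  imports Defs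
begin

text \<open>
  Index by the wedges i = (e, g) with e in E_t and g in E(e), and let X_i be the indicator that
  e is sampled and the coin of i shows heads, and w_i = eta(W_{e,g}). The estimator is
  (sum_i X_i w_i) / mu with mu = r q / m_t. By independence of the two samples every X_i has
  mean mu, and the w_i add up to C_{M,t}, so the estimator is unbiased. As 0 <= X_i <= 1 we have E[X_i X_j] <= E[X_i] = mu, hence
  E[(sum_i X_i w_i)^2] <= mu C^2 and the variance is at most C^2 / mu - C^2 = (m_t - r q)/(r q) C^2.
\<close>

lemma (in prob_space) second_moment_weighted_sum_le:
  fixes X :: "'i \<Rightarrow> 'a \<Rightarrow> real"
  assumes rv: "\<And>i. i \<in> I \<Longrightarrow> X i \<in> borel_measurable M"
    and range: "\<And>i x. i \<in> I \<Longrightarrow> x \<in> space M \<Longrightarrow> 0 \<le> X i x \<and> X i x \<le> 1"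
    and mean: "\<And>i. i \<in> I \<Longrightarrow> expectation (X i) = \<mu>"
    and w: "\<And>i. i \<in> I \<Longrightarrow> 0 \<le> w i"
  shows "expectation (\<lambda>x. (\<Sum>i\<in>I. X i x * w i)\<^sup>2) \<le> \<mu> * (\<Sum>i\<in>I. w i)\<^sup>2"
proof -
  have integrable_X: "integrable M (X i)" if "i \<in> I" for i
    by (rule integrable_const_bound[where B = 1]) (use that rv range in auto)
  have integrable_XX: "integrable M (\<lambda>x. X i x * X j x)" if "i \<in> I" "j \<in> I" for i j
    by (rule integrable_const_bound[where B = 1]) (use that rv range in \<open>auto intro!: mult_le_one\<close>)
  have mixed_le: "expectation (\<lambda>x. X i x * X j x) \<le> \<mu>" if "i \<in> I" "j \<in> I" for i j
  proof -
    have "expectation (\<lambda>x. X i x * X j x) \<le> expectation (X i)"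
      using that range by (intro integral_mono integrable_XX integrable_X) (auto intro: mult_left_le)
    then show ?thesis using mean that by simp
  qed
  have "expectation (\<lambda>x. (\<Sum>i\<in>I. X i x * w i)\<^sup>2)
      = expectation (\<lambda>x. \<Sum>i\<in>I. \<Sum>j\<in>I. X i x * X j x * (w i * w j))"
    by (simp add: power2_eq_square sum_product mult_ac)
  also have "\<dots> = (\<Sum>i\<in>I. \<Sum>j\<in>I. expectation (\<lambda>x. X i x * X j x) * (w i * w j))"
    by (simp add: integrable_XX)
  also have "\<dots> \<le> (\<Sum>i\<in>I. \<Sum>j\<in>I. \<mu> * (w i * w j))"
    by (intro sum_mono mult_right_mono mixed_le) (auto intro: w mult_nonneg_nonneg)
  also have "\<dots> = \<mu> * (\<Sum>i\<in>I. w i)\<^sup>2"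
    by (simp add: power2_eq_square sum_product sum_distrib_left[symmetric])
  finally show ?thesis .
qed

lemma (in prob_space) variance_rescaled_weighted_sum_le:
  fixes X :: "'i \<Rightarrow> 'a \<Rightarrow> real"
  assumes "0 < \<mu>"
    and rv: "\<And>i. i \<in> I \<Longrightarrow> X i \<in> borel_measurable M"
    and range: "\<And>i x. i \<in> I \<Longrightarrow> x \<in> space M \<Longrightarrow> 0 \<le> X i x \<and> X i x \<le> 1"
    and mean: "\<And>i. i \<in> I \<Longrightarrow> expectation (X i) = \<mu>"
    and w: "\<And>i. i \<in> I \<Longrightarrow> 0 \<le> w i"
  shows "variance (\<lambda>x. (\<Sum>i\<in>I. X i x * w i) / \<mu>) \<le> (1 / \<mu> - 1) * (\<Sum>i\<in>I. w i)\<^sup>2"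
proof -
  define Y where "Y x = (\<Sum>i\<in>I. X i x * w i)" for x
  have integrable_X: "integrable M (X i)" if "i \<in> I" for i
    by (rule integrable_const_bound[where B = 1]) (use that rv range in auto)
  have integrable_Y: "integrable M Y"
    unfolding Y_def using integrable_X by auto
  have integrable_XX: "integrable M (\<lambda>x. X i x * X j x)" if "i \<in> I" "j \<in> I" for i j
    by (rule integrable_const_bound[where B = 1]) (use that rv range in \<open>auto intro!: mult_le_one\<close>)
  have integrable_Y2: "integrable M (\<lambda>x. (Y x)\<^sup>2)"
  proof -
    have "(Y x)\<^sup>2 = (\<Sum>i\<in>I. \<Sum>j\<in>I. X i x * X j x * (w i * w j))" for x
      unfolding Y_def by (simp add: power2_eq_square sum_product mult_ac)
    then show ?thesis using integrable_XX by simp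
  qed
  have mean_Y: "expectation Y = \<mu> * (\<Sum>i\<in>I. w i)"
    unfolding Y_def by (simp add: integrable_X mean sum_distrib_left)
  have "variance (\<lambda>x. Y x / \<mu>) = expectation (\<lambda>x. (Y x)\<^sup>2) / \<mu>\<^sup>2 - (\<Sum>i\<in>I. w i)\<^sup>2"
    using integrable_Y integrable_Y2
    by (subst variance_eq) (use \<open>0 < \<mu>\<close> in \<open>simp_all add: mean_Y power_divide\<close>)
  also have "\<dots> \<le> \<mu> * (\<Sum>i\<in>I. w i)\<^sup>2 / \<mu>\<^sup>2 - (\<Sum>i\<in>I. w i)\<^sup>2"
    unfolding Y_def
    by (intro diff_right_mono divide_right_mono second_moment_weighted_sum_le assms) simp_all
  also have "\<dots> = (1 / \<mu> - 1) * (\<Sum>i\<in>I. w i)\<^sup>2"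
    using \<open>0 < \<mu>\<close> by (simp add: power2_eq_square field_simps)
  finally show ?thesis unfolding Y_def .
qed

lemma expectation_pair_pmf_mult:
  fixes f :: "'a \<Rightarrow> real" and g :: "'b \<Rightarrow> real"
  assumes fa: "finite (set_pmf A)" and fb: "finite (set_pmf B)"
  shows "measure_pmf.expectation (pair_pmf A B) (\<lambda>x. f (fst x) * g (snd x))
       = measure_pmf.expectation A f * measure_pmf.expectation B g"
proof -
  have "measure_pmf.expectation (pair_pmf A B) (\<lambda>x. f (fst x) * g (snd x))
      = (\<Sum>x\<in>set_pmf A \<times> set_pmf B. pmf (pair_pmf A B) x * (f (fst x) * g (snd x)))"
    by (subst integral_measure_pmf[of "set_pmf A \<times> set_pmf B"]) (use fa fb in auto)
  also have "\<dots> = (\<Sum>a\<in>set_pmf A. pmf A a * f a) * (\<Sum>b\<in>set_pmf B. pmf B b * g b)"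
    by (simp add: sum.cartesian_product sum_product mult_ac case_prod_beta flip: pmf_pair)
  also have "\<dots> = measure_pmf.expectation A f * measure_pmf.expectation B g"
    using fa fb by (simp add: integral_measure_pmf[of "set_pmf A"] integral_measure_pmf[of "set_pmf B"])
  finally show ?thesis .
qed

lemma variance_cong_pmf:
  fixes f g :: "'a \<Rightarrow> real"
  assumes "\<And>x. x \<in> set_pmf p \<Longrightarrow> f x = g x"
  shows "measure_pmf.variance p f = measure_pmf.variance p g"
proof -
  have "measure_pmf.expectation p f = measure_pmf.expectation p g"
    by (intro integral_cong_AE) (auto simp: AE_measure_pmf_iff assms)
  then show ?thesis
    by (intro integral_cong_AE) (auto simp: AE_measure_pmf_iff assms)
qed

lemma finite_set_Pi_pmf:
  assumes "finite I" and "\<And>i. i \<in> I \<Longrightarrow> finite (set_pmf (p i))"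
  shows "finite (set_pmf (Pi_pmf I d p))"
  using assms by (intro finite_subset[OF set_Pi_pmf_subset'] finite_PiE_dflt) auto

lemma expectation_Pi_pmf_component:
  fixes f :: "'b \<Rightarrow> real"
  assumes "finite I" and "i \<in> I"
  shows "measure_pmf.expectation (Pi_pmf I d p) (\<lambda>\<omega>. f (\<omega> i)) = measure_pmf.expectation (p i) f"
proof -
  have "measure_pmf.expectation (Pi_pmf I d p) (\<lambda>\<omega>. f (\<omega> i))
      = measure_pmf.expectation (map_pmf (\<lambda>\<omega>. \<omega> i) (Pi_pmf I d p)) f"
    by simp
  also have "map_pmf (\<lambda>\<omega>. \<omega> i) (Pi_pmf I d p) = p i"
    using assms by (simp add: Pi_pmf_component)
  finally show ?thesis .
qed

lemma card_subsets_containing: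
  assumes "finite E" and "e \<in> E" and "1 \<le> r"
  shows "card {S. S \<subseteq> E \<and> card S = r \<and> e \<in> S} = (card E - 1) choose (r - 1)"
proof -
  have "bij_betw (\<lambda>S. S - {e}) {S. S \<subseteq> E \<and> card S = r \<and> e \<in> S} {T. T \<subseteq> E - {e} \<and> card T = r - 1}"
  proof (rule bij_betw_byWitness[where f' = "insert e"])
    show "(\<lambda>S. S - {e}) ` {S. S \<subseteq> E \<and> card S = r \<and> e \<in> S} \<subseteq> {T. T \<subseteq> E - {e} \<and> card T = r - 1}"
      using assms by (auto dest: finite_subset)
    show "insert e ` {T. T \<subseteq> E - {e} \<and> card T = r - 1} \<subseteq> {S. S \<subseteq> E \<and> card S = r \<and> e \<in> S}"
    proof clarify
      fix T assume "T \<subseteq> E - {e}" and "card T = r - 1"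
      moreover from this have "finite T" and "e \<notin> T"
        using \<open>finite E\<close> by (auto dest: finite_subset)
      ultimately show "insert e T \<subseteq> E \<and> card (insert e T) = r \<and> e \<in> insert e T"
        using assms by auto
    qed
  qed auto
  then show ?thesis
    using n_subsets[of "E - {e}" "r - 1"] assms by (simp add: bij_betw_same_card)
qed

lemma set_pmf_uniform_subsets:
  assumes "finite E" and "r \<le> card E"
  shows "set_pmf (pmf_of_set {S. S \<subseteq> E \<and> card S = r}) = {S. S \<subseteq> E \<and> card S = r}"
proof -
  obtain T where "T \<subseteq> E" and "card T = r"
    using obtain_subset_with_card_n[OF assms(2)] by metis
  then have "{S. S \<subseteq> E \<and> card S = r} \<noteq> {}"
    by blast
  then show ?thesis
    using assms by simp
qed

lemma expectation_uniform_subset_mem: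
  assumes "finite E" and "e \<in> E" and "1 \<le> r" and "r \<le> card E"
  shows "measure_pmf.expectation (pmf_of_set {S. S \<subseteq> E \<and> card S = r}) (\<lambda>S. of_bool (e \<in> S))
       = real r / real (card E)"
proof -
  let ?A = "{S. S \<subseteq> E \<and> card S = r}"
  have card_A: "card ?A = card E choose r"
    using assms by (simp add: n_subsets)
  then have "card ?A > 0"
    using assms by simp
  then have "?A \<noteq> {}" and "finite ?A"
    using card_gt_0_iff by blast+
  then have "measure_pmf.expectation (pmf_of_set ?A) (\<lambda>S. of_bool (e \<in> S))
      = real ((card E - 1) choose (r - 1)) / real (card E choose r)"
    using assms card_A by (simp add: integral_pmf_of_set Int_def conj_assoc card_subsets_containing)
  also have "\<dots> = real r / real (card E)"
    using times_binomial_minus1_eq[of r "card E"] assms card_gt_0_iff[of E]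
    by (simp add: field_simps flip: of_nat_mult)
  finally show ?thesis .
qed

lemma motif_count_eq_sum_eta:
  assumes "finite Et"
  shows "motif_count M \<delta> Et = (\<Sum>e\<in>Et. eta M \<delta> Et e)"
proof -
  define L where "L = {xs. set xs \<subseteq> Et \<and> delta_instance M \<delta> xs}"
  have "finite L"
  proof (rule finite_subset)
    show "L \<subseteq> {xs. set xs \<subseteq> Et \<and> length xs = length M}"
      unfolding L_def delta_instance_def by auto
    show "finite {xs. set xs \<subseteq> Et \<and> length xs = length M}"
      using assms by (rule finite_lists_length_eq)
  qed
  moreover have "last ` L \<subseteq> Et"
    unfolding L_def delta_instance_def by auto
  ultimately have "card L = (\<Sum>e\<in>Et. card {xs \<in> L. last xs = e})"
    using assms by (simp only: card_eq_sum sum.group)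
  then show ?thesis
    unfolding motif_count_def eta_def L_def by (simp add: conj_assoc)
qed

lemma estimator_eq_sum_wedges:
  assumes "finite Et" and "\<forall>e\<in>Et. finite (Ew e)" and "S \<subseteq> Et"
  shows "estimator Et Ew W r q (S, \<omega>)
       = (\<Sum>i\<in>(SIGMA e:Et. Ew e). of_bool (fst i \<in> S) * of_bool (\<omega> i) * real (W (fst i) (snd i)))
           / (real r / real (card Et) * q)"
proof -
  let ?f = "\<lambda>e. \<Sum>g\<in>Ew e. of_bool (\<omega> (e, g)) * real (W e g)"
  have "(\<Sum>e\<in>S. ?f e) = (\<Sum>e\<in>Et \<inter> S. ?f e)"
    using \<open>S \<subseteq> Et\<close> by (simp add: Int_absorb1)
  also have "\<dots> = (\<Sum>e\<in>Et. if e \<in> S then ?f e else 0)"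
    using \<open>finite Et\<close> by (rule sum.inter_restrict)
  also have "\<dots> = (\<Sum>e\<in>Et. of_bool (e \<in> S) * ?f e)"
    by (intro sum.cong) auto
  also have "\<dots> = (\<Sum>e\<in>Et. \<Sum>g\<in>Ew e. of_bool (e \<in> S) * of_bool (\<omega> (e, g)) * real (W e g))"
    by (simp add: sum_distrib_left mult.assoc)
  also have "\<dots> = (\<Sum>i\<in>(SIGMA e:Et. Ew e). of_bool (fst i \<in> S) * of_bool (\<omega> i) * real (W (fst i) (snd i)))"
    using assms by (simp add: sum.Sigma case_prod_beta)
  finally show ?thesis
    unfolding estimator_def by (simp add: of_bool_def)
qed

lemma expectation_sample_pmf_wedge_indicator:
  assumes "finite Et" and "\<forall>e\<in>Et. finite (Ew e)" and "1 \<le> r" and "r \<le> card Et"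
    and "0 \<le> q" and "q \<le> 1" and "i \<in> (SIGMA e:Et. Ew e)"
  shows "measure_pmf.expectation (sample_pmf Et Ew r q) (\<lambda>x. of_bool (fst i \<in> fst x) * of_bool (snd x i))
       = real r / real (card Et) * q"
proof -
  let ?A = "{S. S \<subseteq> Et \<and> card S = r}"
  have "finite (set_pmf (pmf_of_set ?A))"
    using assms by (simp add: set_pmf_uniform_subsets)
  moreover have "finite (set_pmf (Pi_pmf (SIGMA e:Et. Ew e) False (\<lambda>_. bernoulli_pmf q)))"
    using assms by (intro finite_set_Pi_pmf) auto
  ultimately have "measure_pmf.expectation (sample_pmf Et Ew r q) (\<lambda>x. of_bool (fst i \<in> fst x) * of_bool (snd x i) :: real)
      = measure_pmf.expectation (pmf_of_set ?A) (\<lambda>S. of_bool (fst i \<in> S))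
        * measure_pmf.expectation (Pi_pmf (SIGMA e:Et. Ew e) False (\<lambda>_. bernoulli_pmf q)) (\<lambda>\<omega>. of_bool (\<omega> i))"
    unfolding sample_pmf_def
    by (rule expectation_pair_pmf_mult)
  also have "\<dots> = real r / real (card Et) * q"
    using assms by (auto simp: expectation_uniform_subset_mem expectation_Pi_pmf_component[where f = of_bool])
  finally show ?thesis .
qed

theorem theorem8:
  fixes Et :: "'v tedge set" and M :: "('w \<times> 'w) list" and \<delta> q :: real and r :: nat
    and Ew :: "'v tedge \<Rightarrow> 'v tedge set" and W :: "'v tedge \<Rightarrow> 'v tedge \<Rightarrow> nat"
  assumes fin: "finite Et"
    and times_pos: "\<forall>e\<in>Et. tm e > 0"
    and times_distinct: "inj_on tm Et"
    and motif_len: "length M = 3"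
    and motif_conn: "motif_connected M"
    and delta: "\<delta> \<ge> 0"
    and q: "0 < q" "q \<le> 1"
    and r: "1 \<le> r" "r \<le> card Et"
    and wedge_fin: "\<forall>e\<in>Et. finite (Ew e)"
    and wedge_earlier: "\<forall>e\<in>Et. Ew e \<subseteq> {g\<in>Et. tm g < tm e}"
    and wedge_sum: "\<forall>e\<in>Et. (\<Sum>g\<in>Ew e. W e g) = eta M \<delta> Et e"
  shows "measure_pmf.variance (sample_pmf Et Ew r q) (estimator Et Ew W r q)
           \<le> (real (card Et) - real r * q) / (real r * q) * (real (motif_count M \<delta> Et))\<^sup>2"
proof -
  let ?I = "SIGMA e:Et. Ew e"
  let ?X = "\<lambda>i x. of_bool (fst i \<in> fst x) * of_bool (snd x i) :: real"
  let ?w = "\<lambda>i. real (W (fst i) (snd i))"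
  define \<mu> where "\<mu> = real r / real (card Et) * q"
  have "0 < \<mu>"
    using q r unfolding \<mu>_def by simp
  have "estimator Et Ew W r q x = (\<Sum>i\<in>?I. ?X i x * ?w i) / \<mu>"
    if "x \<in> set_pmf (sample_pmf Et Ew r q)" for x
  proof (cases x)
    case (Pair S \<omega>)
    then have "S \<subseteq> Et"
      using that fin r by (simp add: sample_pmf_def set_pmf_uniform_subsets)
    then show ?thesis
      using fin wedge_fin unfolding Pair \<mu>_def by (simp add: estimator_eq_sum_wedges)
  qed
  then have "measure_pmf.variance (sample_pmf Et Ew r q) (estimator Et Ew W r q)
      = measure_pmf.variance (sample_pmf Et Ew r q) (\<lambda>x. (\<Sum>i\<in>?I. ?X i x * ?w i) / \<mu>)"
    by (rule variance_cong_pmf)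
  also have "\<dots> \<le> (1 / \<mu> - 1) * (\<Sum>i\<in>?I. ?w i)\<^sup>2"
    using fin wedge_fin r q \<open>0 < \<mu>\<close> unfolding \<mu>_def
    by (intro measure_pmf.variance_rescaled_weighted_sum_le)
      (auto simp: expectation_sample_pmf_wedge_indicator)
  also have "(\<Sum>i\<in>?I. ?w i) = (\<Sum>e\<in>Et. \<Sum>g\<in>Ew e. real (W e g))"
    using fin wedge_fin by (simp add: sum.Sigma case_prod_beta)
  also have "\<dots> = real (motif_count M \<delta> Et)"
    using fin wedge_sum by (simp add: motif_count_eq_sum_eta flip: of_nat_sum)
  also have "1 / \<mu> - 1 = (real (card Et) - real r * q) / (real r * q)"
    using q r unfolding \<mu>_def by (simp add: field_simps)
  finally show ?thesis .
qed

end
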